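(* For every $q\in(0,\frac12)$, \[ \sum_{n=2}^\infty q^{\sigma_\infty(n)}\le\frac{(2-q)q}{1-2q}. \]
   Context: $T$ is the Collatz map $T(n)=\frac{3n+1}2$ ($n$ odd), $T(n)=\frac n2$ ($n$ even); for a positive integer $n$, $\sigma_\infty(n)$ is the least $k\ge0$ with $T^k(n)=1$, and $\sigma_\infty(n)=\infty$ if no such $k$ exists. Convention: $q^\infty=0$ for $0<q<1$. *)

theory Defs
  imports Complex_Main "HOL-Library.Extended_Nat"
begin

definition collatzT :: "nat \<Rightarrow> nat" where
  "collatzT n = (if odd n then (3 * n + 1) div 2 else n div 2)"

definition sigma_inf :: "nat \<Rightarrow> enat" where
  "sigma_inf n = (if \<exists>k. (collatzT ^^ k) n = 1
                  then enat (LEAST k. (collatzT ^^ k) n = 1) else \<infinity>)"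

definition epow :: "real \<Rightarrow> enat \<Rightarrow> real" where
  "epow q s = (case s of enat k \<Rightarrow> q ^ k | \<infinity> \<Rightarrow> 0)"

end

theory Submission
  imports Defs
begin

text \<open>Every m has at most two T-preimages, 2m and (2m-1)/3, so at most 2^k numbers reach 2 in
  exactly k steps; only 2 reaches 1 in one step, hence at most 2^k numbers have stopping time k+1.
  Grouping the sum by stopping time (which is never 0 for n \<ge> 2) bounds it by the geometric
  series q * (2q)^k, whose sum q/(1 - 2q) is below the claimed bound.\<close>

lemma card_vimage_le:
  fixes f :: "'a \<Rightarrow> 'b"
  assumes fin: "\<And>y. finite (f -` {y})" and card: "\<And>y. card (f -` {y}) \<le> c"
    and "finite A"
  shows "finite (f -` A) \<and> card (f -` A) \<le> c * card A"
proof -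
  have vimage_UN: "f -` A = (\<Union>y\<in>A. f -` {y})" by blast
  have "card (\<Union>y\<in>A. f -` {y}) \<le> (\<Sum>y\<in>A. card (f -` {y}))"
    using \<open>finite A\<close> by (rule card_UN_le)
  also have "\<dots> \<le> c * card A"
    using card sum_bounded_above[of A "\<lambda>y. card (f -` {y})" c] by (simp add: mult.commute)
  finally show ?thesis
    using \<open>finite A\<close> fin by (simp add: vimage_UN)
qed

lemma card_funpow_vimage_le:
  fixes f :: "'a \<Rightarrow> 'a"
  assumes fin: "\<And>y. finite (f -` {y})" and card: "\<And>y. card (f -` {y}) \<le> c"
    and "finite A"
  shows "finite ((f ^^ k) -` A) \<and> card ((f ^^ k) -` A) \<le> c ^ k * card A"
proof (induction k)
  case 0
  then show ?case using \<open>finite A\<close> by simp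
next
  case (Suc k)
  have vimage_Suc: "(f ^^ Suc k) -` A = f -` ((f ^^ k) -` A)"
    by (simp only: funpow_Suc_right vimage_comp)
  have "finite (f -` ((f ^^ k) -` A)) \<and> card (f -` ((f ^^ k) -` A)) \<le> c * card ((f ^^ k) -` A)"
    using Suc.IH by (intro card_vimage_le fin card) simp
  moreover have "c * card ((f ^^ k) -` A) \<le> c ^ Suc k * card A"
    using Suc.IH by simp
  ultimately show ?case
    unfolding vimage_Suc by (meson order_trans)
qed

lemma collatzT_vimage_singleton_subset: "collatzT -` {m} \<subseteq> {2 * m, (2 * m - 1) div 3}"
  by (auto simp: collatzT_def elim!: oddE)

lemma card_collatzT_vimage_singleton_le: "finite (collatzT -` {m}) \<and> card (collatzT -` {m}) \<le> 2"
proof -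
  have "card {2 * m, (2 * m - 1) div 3} \<le> 2"
    by (simp add: card_insert_if)
  with collatzT_vimage_singleton_subset[of m] show ?thesis
    by (meson card_mono finite.emptyI finite.insertI finite_subset order_trans)
qed

lemma collatzT_eq_1_iff: "collatzT n = 1 \<longleftrightarrow> n = 2"
  by (auto simp: collatzT_def elim!: oddE evenE)

lemma sigma_inf_eq_enatD: "sigma_inf n = enat k \<Longrightarrow> (collatzT ^^ k) n = 1"
  by (auto simp: sigma_inf_def split: if_splits intro: LeastI_ex)

lemma card_sigma_inf_eq_Suc_le:
  "finite {n. sigma_inf n = enat (Suc k)} \<and> card {n. sigma_inf n = enat (Suc k)} \<le> 2 ^ k"
proof -
  have sub: "{n. sigma_inf n = enat (Suc k)} \<subseteq> (collatzT ^^ k) -` {2}"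
  proof
    fix n
    assume "n \<in> {n. sigma_inf n = enat (Suc k)}"
    then have "collatzT ((collatzT ^^ k) n) = 1"
      by (auto dest: sigma_inf_eq_enatD)
    then show "n \<in> (collatzT ^^ k) -` {2}"
      by (simp only: collatzT_eq_1_iff vimage_singleton_eq)
  qed
  have "finite ((collatzT ^^ k) -` {2}) \<and> card ((collatzT ^^ k) -` {2}) \<le> 2 ^ k"
    using card_funpow_vimage_le[of collatzT 2 "{2}" k] card_collatzT_vimage_singleton_le by simp
  with sub show ?thesis
    by (meson card_mono finite_subset order_trans)
qed

lemma epow_sums:
  assumes "s \<noteq> 0"
  shows "(\<lambda>k. if s = enat (Suc k) then q ^ Suc k else 0) sums epow q s"
proof (cases s)
  case (enat m)
  with assms obtain j where "m = Suc j" by (cases m) (auto simp: zero_enat_def)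
  with enat sums_single[of j "\<lambda>k. q ^ Suc k"] show ?thesis
    by (simp add: epow_def eq_commute)
next
  case infinity
  then show ?thesis by (simp add: epow_def)
qed

lemma sum_epow_sigma_inf_le:
  fixes q :: real
  assumes "0 \<le> q" "q < 1/2" and "finite F" "1 \<notin> F"
  shows "(\<Sum>n\<in>F. epow q (sigma_inf n)) \<le> q / (1 - 2 * q)"
proof -
  let ?level = "\<lambda>k. {n\<in>F. sigma_inf n = enat (Suc k)}"
  have "sigma_inf n \<noteq> 0" if "n \<in> F" for n
    using that \<open>1 \<notin> F\<close> sigma_inf_eq_enatD[of n 0] by (auto simp: zero_enat_def)
  then have "(\<lambda>k. \<Sum>n\<in>F. if sigma_inf n = enat (Suc k) then q ^ Suc k else 0)
      sums (\<Sum>n\<in>F. epow q (sigma_inf n))"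
    by (intro sums_sum epow_sums)
  then have by_level: "(\<lambda>k. q ^ Suc k * card (?level k)) sums (\<Sum>n\<in>F. epow q (sigma_inf n))"
    using \<open>finite F\<close> by (simp add: sum.If_cases Int_def conj_commute mult_ac)
  have "card (?level k) \<le> card {n. sigma_inf n = enat (Suc k)}" for k
    using card_sigma_inf_eq_Suc_le[of k] by (intro card_mono) auto
  then have "card (?level k) \<le> (2::real) ^ k" for k
    using card_sigma_inf_eq_Suc_le[of k] by (metis of_nat_le_iff of_nat_numeral of_nat_power order_trans)
  then have "q ^ Suc k * card (?level k) \<le> q ^ Suc k * 2 ^ k" for k
    using \<open>0 \<le> q\<close> by (intro mult_left_mono) auto
  then have level_le: "q ^ Suc k * card (?level k) \<le> q * (2 * q) ^ k" for k
    by (simp add: power_mult_distrib mult_ac)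
  have "(\<lambda>k. q * (2 * q) ^ k) sums (q * (1 / (1 - 2 * q)))"
    using assms by (intro sums_mult geometric_sums) simp
  with sums_le[OF level_le by_level] show ?thesis
    by simp
qed

theorem mainTheorem13:
  fixes q :: real
  assumes "0 < q" and "q < 1/2"
  shows "summable (\<lambda>n. epow q (sigma_inf (n + 2)))
         \<and> (\<Sum>n. epow q (sigma_inf (n + 2))) \<le> (2 - q) * q / (1 - 2 * q)"
proof -
  have nonneg: "0 \<le> epow q (sigma_inf (n + 2))" for n
    using assms by (simp add: epow_def split: enat.split)
  have partial: "(\<Sum>n<N. epow q (sigma_inf (n + 2))) \<le> q / (1 - 2 * q)" for N
  proof -
    have "(\<Sum>n<N. epow q (sigma_inf (n + 2))) = (\<Sum>n\<in>(\<lambda>n. n + 2) ` {..<N}. epow q (sigma_inf n))"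
      by (subst sum.reindex) (auto simp: inj_on_def)
    also have "\<dots> \<le> q / (1 - 2 * q)"
      using assms by (intro sum_epow_sigma_inf_le) auto
    finally show ?thesis .
  qed
  have summable: "summable (\<lambda>n. epow q (sigma_inf (n + 2)))"
    using nonneg partial by (rule summableI_nonneg_bounded)
  have "(\<Sum>n. epow q (sigma_inf (n + 2))) \<le> q / (1 - 2 * q)"
    using summable partial by (rule suminf_le_const)
  also have "\<dots> \<le> (2 - q) * q / (1 - 2 * q)"
    using assms by (intro divide_right_mono) (auto simp: algebra_simps)
  finally show ?thesis
    using summable by simp
qed

end
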